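(* Let $\phi_1,\phi_2:\mathbb{R}\to\mathbb{R}$ be functions of extended class $\mathcal{K}_\infty$ satisfying $$\phi_1\circ\phi_2(r)>r\ \ \forall r<0,\qquad \phi_1\circ\phi_2(r)<r\ \ \forall r>0.$$ Then there exists a function $\phi$ of extended class $\mathcal{K}_\infty$ such that (1) $\phi_1^{-1}(r)<\phi(r)<\phi_2(r)$ for all $r<0$, and $\phi_2(r)<\phi(r)<\phi_1^{-1}(r)$ for all $r>0$; (2) $\phi$ is continuously differentiable on $\mathbb{R}\setminus\{0\}$ and $\phi'(r)>0$ for all $r\in\mathbb{R}\setminus\{0\}$.
   Context: A continuous function $\phi:\mathbb{R}\to\mathbb{R}$ with $\phi(0)=0$ is of extended class $\mathcal{K}_\infty$ if it is strictly increasing and unbounded above and below (hence a bijection of $\mathbb{R}$, with inverse $\phi^{-1}$ also of extended class $\mathcal{K}_\infty$). $\circ$ denotes composition. *)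

theory Defs
  imports "HOL-Analysis.Analysis"
begin

definition ext_class_K_inf :: "(real \<Rightarrow> real) \<Rightarrow> bool" where
  "ext_class_K_inf \<phi> \<longleftrightarrow> continuous_on UNIV \<phi> \<and> \<phi> 0 = 0 \<and> strict_mono \<phi> \<and>
     (\<forall>M. \<exists>r. \<phi> r > M) \<and> (\<forall>M. \<exists>r. \<phi> r < M)"

end

theory Submission
  imports Defs
begin

(* By the symmetry phi(x) -> -phi(-x) it suffices to find psi on (0, oo) with
   phi2 < psi < inv phi1 there.  The map i = phi1 o phi2 is a contraction of (0, oo).
   One first builds a C^1 coordinate S : (0, oo) -> R with S' > 0 in which i moves every
   point down by at least 1, i.e. S (i t) + 1 <= S t.  In the coordinate u = S r the lower
   bound becomes M = phi2 o inv S, and its unit average F u = integral of M over [u, u + 1]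
   lies strictly between M u and M (u + 1).  Then psi = F o S exceeds phi2, and
   psi r < phi2 q with S q = S r + 1; the gap property gives i q <= r, i.e. phi2 q <= inv phi1 r.
   The two halves glue at 0 because both bounds vanish there. *)

lemma ext_class_K_inf_isCont: "ext_class_K_inf f \<Longrightarrow> isCont f x"
  by (simp add: ext_class_K_inf_def continuous_on_eq_continuous_at)

lemma ext_class_K_inf_strict_mono: "ext_class_K_inf f \<Longrightarrow> strict_mono f"
  by (simp add: ext_class_K_inf_def)

lemma ext_class_K_inf_zero: "ext_class_K_inf f \<Longrightarrow> f 0 = 0"
  by (simp add: ext_class_K_inf_def)

lemma ext_class_K_inf_surj:
  assumes "ext_class_K_inf f"
  shows "surj f"
proof -
  have "\<exists>x. f x = y" for y
  proof -
    obtain a where a: "f a < y"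
      using assms by (auto simp: ext_class_K_inf_def)
    obtain b where b: "y < f b"
      using assms by (auto simp: ext_class_K_inf_def)
    have "a \<le> b"
    proof (rule ccontr)
      assume "\<not> a \<le> b"
      then have "f b < f a"
        using ext_class_K_inf_strict_mono[OF assms] by (simp add: strict_monoD)
      with a b show False by simp
    qed
    then show ?thesis
      using IVT[of f a y b] a b ext_class_K_inf_isCont[OF assms] by auto
  qed
  then show ?thesis
    unfolding surj_def by (simp add: eq_commute)
qed

lemma ext_class_K_inf_bij: "ext_class_K_inf f \<Longrightarrow> bij f"
  by (simp add: bij_def ext_class_K_inf_surj ext_class_K_inf_strict_mono strict_mono_imp_inj_on)

lemma ext_class_K_inf_f_inv: "ext_class_K_inf f \<Longrightarrow> f (inv f y) = y"
  by (simp add: ext_class_K_inf_surj surj_f_inv_f)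

lemma ext_class_K_inf_inv_f: "ext_class_K_inf f \<Longrightarrow> inv f (f x) = x"
  by (simp add: ext_class_K_inf_bij bij_is_inj)

lemma ext_class_K_inf_le_inv_iff: "ext_class_K_inf f \<Longrightarrow> x \<le> inv f y \<longleftrightarrow> f x \<le> y"
  using strict_mono_less_eq[OF ext_class_K_inf_strict_mono, of f x "inv f y"]
  by (simp add: ext_class_K_inf_f_inv)

lemma ext_class_K_inf_pos: "ext_class_K_inf f \<Longrightarrow> 0 < x \<Longrightarrow> 0 < f x"
  using strict_monoD[OF ext_class_K_inf_strict_mono, of f 0 x] by (simp add: ext_class_K_inf_zero)

lemma ext_class_K_inf_neg: "ext_class_K_inf f \<Longrightarrow> x < 0 \<Longrightarrow> f x < 0"
  using strict_monoD[OF ext_class_K_inf_strict_mono, of f x 0] by (simp add: ext_class_K_inf_zero)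

lemma ext_class_K_inf_inv:
  assumes f: "ext_class_K_inf f"
  shows "ext_class_K_inf (inv f)"
  unfolding ext_class_K_inf_def
proof (intro conjI allI)
  have "isCont (inv f) y" for y
    using isCont_inverse_function[of 1 "inv f y" "inv f" f]
    by (simp add: f ext_class_K_inf_isCont ext_class_K_inf_inv_f ext_class_K_inf_f_inv)
  then show "continuous_on UNIV (inv f)"
    by (simp add: continuous_at_imp_continuous_on)
  show "strict_mono (inv f)"
  proof (rule strict_monoI)
    fix x y :: real assume "x < y"
    then show "inv f x < inv f y"
      using strict_mono_less[OF ext_class_K_inf_strict_mono[OF f], of "inv f x" "inv f y"]
      by (simp add: f ext_class_K_inf_f_inv)
  qed
  show "inv f 0 = 0"
    using ext_class_K_inf_inv_f[OF f, of 0] by (simp add: f ext_class_K_inf_zero)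
  have "inv f (f (M + 1)) > M" "inv f (f (M - 1)) < M" for M
    by (simp_all add: f ext_class_K_inf_inv_f)
  then show "\<exists>r. inv f r > M" "\<exists>r. inv f r < M" for M
    by blast+
qed

lemma ext_class_K_inf_comp:
  assumes f: "ext_class_K_inf f" and g: "ext_class_K_inf g"
  shows "ext_class_K_inf (f \<circ> g)"
  unfolding ext_class_K_inf_def
proof (intro conjI allI)
  show "continuous_on UNIV (f \<circ> g)"
    using isCont_o2[OF ext_class_K_inf_isCont[OF g] ext_class_K_inf_isCont[OF f]]
    by (simp add: o_def continuous_at_imp_continuous_on)
  show "(f \<circ> g) 0 = 0"
    using f g by (simp add: ext_class_K_inf_zero)
  show "strict_mono (f \<circ> g)"
    using strict_mono_o[OF ext_class_K_inf_strict_mono[OF f] ext_class_K_inf_strict_mono[OF g]] .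
  have "(f \<circ> g) (inv g (inv f (M + 1))) > M" "(f \<circ> g) (inv g (inv f (M - 1))) < M" for M
    using f g by (simp_all add: ext_class_K_inf_f_inv)
  then show "\<exists>r. (f \<circ> g) r > M" "\<exists>r. (f \<circ> g) r < M" for M
    by blast+
qed

lemma ext_class_K_inf_reflect:
  assumes f: "ext_class_K_inf f"
  shows "ext_class_K_inf (\<lambda>x. - f (- x))"
  unfolding ext_class_K_inf_def
proof (intro conjI allI)
  show "continuous_on UNIV (\<lambda>x. - f (- x))"
    using isCont_o2[OF continuous_ident[THEN isCont_minus] ext_class_K_inf_isCont[OF f]]
    by (intro continuous_at_imp_continuous_on ballI isCont_minus) simp
  show "- f (- 0) = 0"
    using f by (simp add: ext_class_K_inf_zero)
  show "strict_mono (\<lambda>x. - f (- x))"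
  proof (rule strict_monoI)
    fix x y :: real assume "x < y"
    then show "- f (- x) < - f (- y)"
      using strict_monoD[OF ext_class_K_inf_strict_mono[OF f], of "- y" "- x"] by simp
  qed
  have "- f (- (- inv f (- M - 1))) > M" "- f (- (- inv f (- M + 1))) < M" for M
    using f by (simp_all add: ext_class_K_inf_f_inv)
  then show "\<exists>r. - f (- r) > M" "\<exists>r. - f (- r) < M" for M
    by blast+
qed

lemma inv_reflect:
  fixes f :: "'a::group_add \<Rightarrow> 'b::group_add"
  assumes "bij f"
  shows "inv (\<lambda>x. - f (- x)) = (\<lambda>y. - inv f (- y))"
proof (rule inv_equality)
  show "- inv f (- (- f (- x))) = x" for x
    using inv_f_f[OF bij_is_inj[OF assms], of "- x"] by simp
  show "- f (- (- inv f (- y))) = y" for y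
    using surj_f_inv_f[OF bij_is_surj[OF assms], of "- y"] by simp
qed

definition C1_pos_deriv_on :: "real set \<Rightarrow> (real \<Rightarrow> real) \<Rightarrow> bool" where
  "C1_pos_deriv_on A f \<longleftrightarrow> (\<forall>r\<in>A. f differentiable (at r) \<and> isCont (deriv f) r \<and> 0 < deriv f r)"

lemma C1_pos_deriv_onI:
  assumes "open A"
    and "\<And>x. x \<in> A \<Longrightarrow> (f has_real_derivative f' x) (at x) \<and> isCont f' x \<and> 0 < f' x"
  shows "C1_pos_deriv_on A f"
  unfolding C1_pos_deriv_on_def
proof (intro ballI conjI)
  fix r assume r: "r \<in> A"
  have deriv_eq: "\<forall>\<^sub>F x in nhds r. deriv f x = f' x"
    using eventually_nhds_in_open[OF assms(1) r]
    by eventually_elim (use assms(2) in \<open>blast intro: DERIV_imp_deriv\<close>)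
  from assms(2)[OF r] have f': "(f has_real_derivative f' r) (at r)" "isCont f' r" "0 < f' r"
    by auto
  show "f differentiable (at r)"
    using f'(1) real_differentiable_def by blast
  show "isCont (deriv f) r"
    using isCont_cong[OF deriv_eq] f'(2) by simp
  show "0 < deriv f r"
    using DERIV_imp_deriv[OF f'(1)] f'(3) by simp
qed

lemma C1_pos_deriv_on_has_real_derivative:
  "C1_pos_deriv_on A f \<Longrightarrow> r \<in> A \<Longrightarrow> (f has_real_derivative deriv f r) (at r)"
  by (simp add: C1_pos_deriv_on_def DERIV_deriv_iff_real_differentiable)

lemma C1_pos_deriv_on_continuous_on_deriv: "C1_pos_deriv_on A f \<Longrightarrow> continuous_on A (deriv f)"
  by (simp add: C1_pos_deriv_on_def continuous_at_imp_continuous_on)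

lemma C1_pos_deriv_on_isCont: "C1_pos_deriv_on A f \<Longrightarrow> r \<in> A \<Longrightarrow> isCont f r"
  by (rule DERIV_isCont[OF C1_pos_deriv_on_has_real_derivative])

lemma C1_pos_deriv_on_less:
  assumes "C1_pos_deriv_on A f" "a < b" "{a..b} \<subseteq> A"
  shows "f a < f b"
proof (rule DERIV_pos_imp_increasing[OF \<open>a < b\<close>])
  fix x assume "a \<le> x" "x \<le> b"
  then have x: "x \<in> A"
    using assms(3) by auto
  have "(f has_real_derivative deriv f x) (at x)" "0 < deriv f x"
    using C1_pos_deriv_on_has_real_derivative[OF assms(1) x] assms(1) x by (auto simp: C1_pos_deriv_on_def)
  then show "\<exists>y. (f has_real_derivative y) (at x) \<and> 0 < y"
    by blast
qed

lemma C1_pos_deriv_on_cong: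
  assumes "open A" "\<And>x. x \<in> A \<Longrightarrow> f x = g x" "C1_pos_deriv_on A f"
  shows "C1_pos_deriv_on A g"
proof (rule C1_pos_deriv_onI[OF \<open>open A\<close>])
  fix x assume x: "x \<in> A"
  have "\<forall>\<^sub>F y in nhds x. f y = g y"
    using eventually_nhds_in_open[OF assms(1) x] by eventually_elim (simp add: assms(2))
  then have "(g has_real_derivative deriv f x) (at x)"
    using DERIV_cong_ev[OF refl _ refl, of f g x "deriv f x"]
      C1_pos_deriv_on_has_real_derivative[OF assms(3) x] by simp
  then show "(g has_real_derivative deriv f x) (at x) \<and> isCont (deriv f) x \<and> 0 < deriv f x"
    using assms(3) x by (simp add: C1_pos_deriv_on_def)
qed

lemma C1_pos_deriv_on_comp:
  assumes "open A" "C1_pos_deriv_on UNIV g" "C1_pos_deriv_on A f"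
  shows "C1_pos_deriv_on A (g \<circ> f)"
proof (rule C1_pos_deriv_onI[OF \<open>open A\<close>])
  fix x assume x: "x \<in> A"
  have "isCont (\<lambda>x. deriv g (f x)) x"
    using isCont_o2[OF C1_pos_deriv_on_isCont[OF assms(3) x], of "deriv g"] assms(2)
    by (simp add: C1_pos_deriv_on_def)
  moreover have "(g \<circ> f has_real_derivative deriv g (f x) * deriv f x) (at x)"
    using DERIV_chain[OF C1_pos_deriv_on_has_real_derivative[OF assms(2)]
        C1_pos_deriv_on_has_real_derivative[OF assms(3) x]] by simp
  ultimately show "(g \<circ> f has_real_derivative deriv g (f x) * deriv f x) (at x)
      \<and> isCont (\<lambda>x. deriv g (f x) * deriv f x) x \<and> 0 < deriv g (f x) * deriv f x"
    using assms(2,3) x by (simp add: C1_pos_deriv_on_def)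
qed

lemma C1_pos_deriv_on_reflect:
  assumes "open A" "C1_pos_deriv_on A f"
  shows "C1_pos_deriv_on (uminus ` A) (\<lambda>x. - f (- x))"
proof (rule C1_pos_deriv_onI)
  show "open (uminus ` A)"
    using assms(1) by (simp add: open_negations)
  fix x assume "x \<in> uminus ` A"
  then have x: "- x \<in> A" by auto
  have "isCont (deriv f) (- x)"
    using assms(2) x by (simp add: C1_pos_deriv_on_def)
  then have "isCont (\<lambda>x. deriv f (- x)) x"
    by (rule isCont_o2[OF continuous_ident[THEN isCont_minus]])
  moreover have "((\<lambda>x. f (- x)) has_real_derivative - deriv f (- x)) (at x)"
    using C1_pos_deriv_on_has_real_derivative[OF assms(2) x] by (rule DERIV_mirror[THEN iffD1])
  then have "((\<lambda>x. - f (- x)) has_real_derivative deriv f (- x)) (at x)"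
    using DERIV_minus by fastforce
  ultimately show "((\<lambda>x. - f (- x)) has_real_derivative deriv f (- x)) (at x)
      \<and> isCont (\<lambda>x. deriv f (- x)) x \<and> 0 < deriv f (- x)"
    using assms(2) x by (simp add: C1_pos_deriv_on_def)
qed

lemma C1_pos_deriv_on_glue:
  assumes "C1_pos_deriv_on {0<..} f" "C1_pos_deriv_on {0<..} g"
  shows "C1_pos_deriv_on (UNIV - {0}) (\<lambda>r. if 0 < r then f r else if r < 0 then - g (- r) else 0)"
    (is "C1_pos_deriv_on _ ?h")
proof -
  have "C1_pos_deriv_on {0<..} ?h"
    by (rule C1_pos_deriv_on_cong[OF _ _ assms(1)]) auto
  moreover have "C1_pos_deriv_on {..<0} (\<lambda>r. - g (- r))"
    using C1_pos_deriv_on_reflect[OF _ assms(2)] by simp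
  then have "C1_pos_deriv_on {..<0} ?h"
    by (rule C1_pos_deriv_on_cong[rotated 2]) auto
  ultimately show ?thesis
    by (auto simp: C1_pos_deriv_on_def neq_iff)
qed

lemma real_antiderivative:
  fixes a b :: ereal and f :: "real \<Rightarrow> real"
  assumes "a < b" "\<And>x. a < x \<Longrightarrow> x < b \<Longrightarrow> isCont f x"
  shows "\<exists>F. \<forall>x. a < x \<longrightarrow> x < b \<longrightarrow> (F has_real_derivative f x) (at x)"
  using einterval_antiderivative[OF assms] by (simp add: has_real_derivative_iff_has_vector_derivative)

lemma C1_pos_deriv_between_unit_shift:
  assumes cont: "\<And>u. isCont M u" and mono: "strict_mono M"
  shows "\<exists>F. C1_pos_deriv_on UNIV F \<and> (\<forall>u. M u < F u \<and> F u < M (u + 1))"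
proof -
  obtain P where P: "\<And>x. (P has_real_derivative M x) (at x)"
    using real_antiderivative[of "-\<infinity>" "\<infinity>" M] cont by auto
  define F where "F u = P (u + 1) - P u" for u
  have F': "(F has_real_derivative M (u + 1) - M u) (at u)" for u
    unfolding F_def using DERIV_shift[THEN iffD1, OF P] by (intro DERIV_diff P) simp
  have "C1_pos_deriv_on UNIV F"
  proof (rule C1_pos_deriv_onI)
    fix u :: real
    have "isCont (\<lambda>u. M (u + 1)) u"
      using isCont_o2[where f="\<lambda>u. u + 1" and g=M] cont by simp
    then show "(F has_real_derivative M (u + 1) - M u) (at u) \<and> isCont (\<lambda>u. M (u + 1) - M u) u
        \<and> 0 < M (u + 1) - M u"
      using F' cont mono by (simp add: strict_mono_less)
  qed simp
  moreover have "M u < F u \<and> F u < M (u + 1)" for u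
  proof -
    obtain z where "u < z" "z < u + 1" "F u = M z"
      using MVT2[of u "u + 1" P M] P by (auto simp: F_def)
    then show ?thesis
      using mono by (simp add: strict_mono_less)
  qed
  ultimately show ?thesis
    by blast
qed

lemma contraction_gap_minorant:
  assumes i: "ext_class_K_inf i" and contr: "\<And>t. 0 < t \<Longrightarrow> i t < t"
  shows "\<exists>w. \<forall>s>0. isCont w s \<and> 0 < w s \<and> (\<forall>t. i t \<le> s \<longrightarrow> s \<le> t \<longrightarrow> w s \<le> t - i t)"
proof -
  define j where "j = inv i"
  have j: "ext_class_K_inf j" and ij: "\<And>s. i (j s) = s"
    unfolding j_def using i by (simp_all add: ext_class_K_inf_inv ext_class_K_inf_f_inv)
  have i_less: "i a < i b \<longleftrightarrow> a < b" and i_le: "i a \<le> i b \<longleftrightarrow> a \<le> b" for a b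
    using ext_class_K_inf_strict_mono[OF i] by (simp_all add: strict_mono_less strict_mono_less_eq)
  have j_gt: "s < j s" if "0 < s" for s
    using ij[of s] contr[OF that] i_le[of "j s" s] by linarith
  \<comment> \<open>The t with i t \<le> s \<le> t form the interval [s, j s]; split it at its midpoint c s.\<close>
  define c where "c s = (s + j s) / 2" for s
  define w where "w s = min (s - i (c s)) (c s - s)" for s
  have "0 < w s" if "0 < s" for s
  proof -
    have "s < c s" "c s < j s"
      using j_gt[OF that] by (auto simp: c_def)
    then show ?thesis
      using i_less[of "c s" "j s"] ij by (simp add: w_def)
  qed
  moreover have "w s \<le> t - i t" if "i t \<le> s" "s \<le> t" for s t
    using that i_le[of t "c s"] by (cases "t \<le> c s") (auto simp: w_def)
  moreover have "isCont w s" for s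
  proof -
    have "isCont c s"
      unfolding c_def using ext_class_K_inf_isCont[OF j] by (intro continuous_intros) auto
    then have "isCont (\<lambda>s. i (c s)) s"
      using isCont_o2 ext_class_K_inf_isCont[OF i] by blast
    then show ?thesis
      unfolding w_def using \<open>isCont c s\<close> by (intro continuous_intros)
  qed
  ultimately show ?thesis
    by blast
qed

lemma contraction_weight:
  assumes i: "ext_class_K_inf i" and contr: "\<And>t. 0 < t \<Longrightarrow> i t < t"
  shows "\<exists>\<sigma>. \<forall>s>0. isCont \<sigma> s \<and> 1 \<le> \<sigma> s \<and> 1 / s\<^sup>2 \<le> \<sigma> s
           \<and> (\<forall>t. i t \<le> s \<longrightarrow> s \<le> t \<longrightarrow> 1 / (t - i t) \<le> \<sigma> s)"
proof -
  obtain w where w: "\<And>s. 0 < s \<Longrightarrow> isCont w s \<and> 0 < w s"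
    and w_le: "\<And>s t. 0 < s \<Longrightarrow> i t \<le> s \<Longrightarrow> s \<le> t \<Longrightarrow> w s \<le> t - i t"
    using contraction_gap_minorant[OF assms] by blast
  \<comment> \<open>The summands 1 and 1 / s^2 make every antiderivative of \<sigma> map (0, \<infinity>) onto \<real>.\<close>
  define \<sigma> where "\<sigma> s = 1 / w s + 1 + 1 / s\<^sup>2" for s
  have "isCont \<sigma> s" if "0 < s" for s
    unfolding \<sigma>_def using w[OF that] that by (intro continuous_intros) auto
  moreover have "1 \<le> \<sigma> s" "1 / s\<^sup>2 \<le> \<sigma> s" if "0 < s" for s
    using w[OF that] that by (simp_all add: \<sigma>_def)
  moreover have "1 / (t - i t) \<le> \<sigma> s" if "0 < s" "i t \<le> s" "s \<le> t" for s t
  proof -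
    have "1 / (t - i t) \<le> 1 / w s"
      using w[OF that(1)] w_le[OF that] by (simp add: frac_le)
    moreover have "0 < 1 / s\<^sup>2"
      using that(1) by simp
    ultimately show ?thesis
      unfolding \<sigma>_def by linarith
  qed
  ultimately show ?thesis
    by blast
qed

lemma antiderivative_growth_at_top:
  assumes S: "\<And>x. 0 < x \<Longrightarrow> (S has_real_derivative \<sigma> x) (at x)"
    and ge_1: "\<And>x. 0 < x \<Longrightarrow> 1 \<le> \<sigma> x" and "1 \<le> b"
  shows "S 1 + (b - 1) \<le> S b"
proof -
  have "S 1 - 1 \<le> S b - b"
  proof (rule DERIV_nonneg_imp_nondecreasing[OF \<open>1 \<le> b\<close>])
    fix x :: real assume "1 \<le> x"
    then show "\<exists>y. ((\<lambda>x. S x - x) has_real_derivative y) (at x) \<and> 0 \<le> y"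
      using DERIV_diff[OF S DERIV_ident, of x] ge_1[of x] by auto
  qed
  then show ?thesis by simp
qed

lemma antiderivative_growth_at_zero:
  assumes S: "\<And>x. 0 < x \<Longrightarrow> (S has_real_derivative \<sigma> x) (at x)"
    and ge_inverse_square: "\<And>x. 0 < x \<Longrightarrow> 1 / x\<^sup>2 \<le> \<sigma> x" and "0 < a" "a \<le> 1"
  shows "S a \<le> S 1 - (1 / a - 1)"
proof -
  have "S a + 1 / a \<le> S 1 + 1 / 1"
  proof (rule DERIV_nonneg_imp_nondecreasing[OF \<open>a \<le> 1\<close>])
    fix x :: real assume "a \<le> x"
    then have "0 < x"
      using \<open>0 < a\<close> by simp
    then have "((\<lambda>x. S x + 1 / x) has_real_derivative \<sigma> x - 1 / x\<^sup>2) (at x)"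
      using S[of x] by (auto intro!: derivative_eq_intros simp: power2_eq_square)
    then show "\<exists>y. ((\<lambda>x. S x + 1 / x) has_real_derivative y) (at x) \<and> 0 \<le> y"
      using ge_inverse_square[OF \<open>0 < x\<close>] by auto
  qed
  then show ?thesis by simp
qed

lemma antiderivative_surj_on_pos:
  assumes S: "\<And>x. 0 < x \<Longrightarrow> (S has_real_derivative \<sigma> x) (at x)"
    and ge_1: "\<And>x. 0 < x \<Longrightarrow> 1 \<le> \<sigma> x"
    and ge_inverse_square: "\<And>x. 0 < x \<Longrightarrow> 1 / x\<^sup>2 \<le> \<sigma> x"
  shows "\<exists>x>0. S x = u"
proof -
  define b where "b = max 1 (u - S 1 + 1)"
  define a where "a = 1 / max 1 (S 1 - u + 1)"
  have a: "0 < a" "a \<le> 1" "1 / a = max 1 (S 1 - u + 1)"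
    by (auto simp: a_def)
  have "S a \<le> u" "u \<le> S b" "a \<le> b"
    using antiderivative_growth_at_zero[OF S ge_inverse_square a(1,2)]
      antiderivative_growth_at_top[OF S ge_1, of b] a
    by (auto simp: b_def)
  moreover have "\<forall>x. a \<le> x \<and> x \<le> b \<longrightarrow> isCont S x"
    using a(1) by (auto intro: DERIV_isCont[OF S])
  ultimately obtain x where "a \<le> x" "S x = u"
    using IVT[of S a u b] by blast
  then show ?thesis
    using a(1) by (intro exI[of _ x]) auto
qed

lemma contraction_scale:
  assumes i: "ext_class_K_inf i" and contr: "\<And>t. 0 < t \<Longrightarrow> i t < t"
  shows "\<exists>S. C1_pos_deriv_on {0<..} S \<and> (\<forall>u. \<exists>x>0. S x = u) \<and> (\<forall>t>0. S (i t) + 1 \<le> S t)"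
proof -
  obtain \<sigma> where \<sigma>: "\<And>s. 0 < s \<Longrightarrow> isCont \<sigma> s \<and> 1 \<le> \<sigma> s \<and> 1 / s\<^sup>2 \<le> \<sigma> s
      \<and> (\<forall>t. i t \<le> s \<longrightarrow> s \<le> t \<longrightarrow> 1 / (t - i t) \<le> \<sigma> s)"
    using contraction_weight[OF assms] by blast
  obtain S where S: "\<And>x. 0 < x \<Longrightarrow> (S has_real_derivative \<sigma> x) (at x)"
    using real_antiderivative[of 0 \<infinity> \<sigma>] \<sigma> by (auto simp: zero_ereal_def)
  have "C1_pos_deriv_on {0<..} S"
    using S \<sigma> by (intro C1_pos_deriv_onI) (auto intro: less_le_trans[OF zero_less_one])
  moreover have "\<exists>x>0. S x = u" for u
    using antiderivative_surj_on_pos[OF S] \<sigma> by blast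
  moreover have "S (i t) + 1 \<le> S t" if t: "0 < t" for t
  proof -
    have "0 < i t"
      using ext_class_K_inf_pos[OF i t] .
    then obtain z where z: "i t < z" "z < t" "S t - S (i t) = (t - i t) * \<sigma> z"
      using MVT2[of "i t" t S \<sigma>] contr[OF t] S by force
    have "1 / (t - i t) \<le> \<sigma> z"
      using \<sigma>[of z] z \<open>0 < i t\<close> by auto
    then have "1 \<le> (t - i t) * \<sigma> z"
      using contr[OF t] by (simp add: field_simps)
    then show ?thesis
      using z(3) by simp
  qed
  ultimately show ?thesis
    by blast
qed

lemma C1_pos_deriv_on_pos_inverse:
  assumes S: "C1_pos_deriv_on {0<..} S" and onto: "\<And>u. \<exists>x>0. S x = u"
  shows "\<exists>Q. strict_mono Q \<and> (\<forall>u. 0 < Q u \<and> S (Q u) = u \<and> isCont Q u) \<and> (\<forall>x>0. Q (S x) = x)"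
proof -
  have S_mono: "S a < S b" if "0 < a" "a < b" for a b
  proof (rule C1_pos_deriv_on_less[OF S that(2)])
    show "{a..b} \<subseteq> {0<..}"
      using that(1) by auto
  qed
  have S_less: "S a < S b \<longleftrightarrow> a < b" if "0 < a" "0 < b" for a b
    using S_mono[of a b] S_mono[of b a] that by (cases a b rule: linorder_cases) auto
  have "strict_mono_on {0<..} S"
    by (rule strict_mono_onI) (simp add: S_mono)
  then have inj: "inj_on S {0<..}"
    by (rule strict_mono_on_imp_inj_on)
  define Q where "Q = inv_into {0<..} S"
  have Q: "0 < Q u" "S (Q u) = u" for u
    using onto[of u] inv_into_into[of u S "{0<..}"] f_inv_into_f[of u S "{0<..}"]
    by (auto simp: Q_def image_iff)
  have QS: "Q (S x) = x" if "0 < x" for x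
    using inv_into_f_f[OF inj] that by (simp add: Q_def)
  have "strict_mono Q"
  proof (rule strict_monoI)
    fix u v :: real assume "u < v"
    then show "Q u < Q v"
      using S_less[OF Q(1) Q(1), of u v] Q(2) by simp
  qed
  moreover have "isCont Q u" for u
  proof -
    have "isCont Q (S (Q u))"
    proof (rule isCont_inverse_function[where f=S and g=Q and x="Q u" and d="Q u / 2"])
      show "0 < Q u / 2"
        using Q(1) by simp
      have pos: "0 < z" if "\<bar>z - Q u\<bar> \<le> Q u / 2" for z
        using that Q(1)[of u] abs_ge_minus_self[of "z - Q u"] by linarith
      show "Q (S z) = z" if "\<bar>z - Q u\<bar> \<le> Q u / 2" for z
        using QS[OF pos[OF that]] .
      show "isCont S z" if "\<bar>z - Q u\<bar> \<le> Q u / 2" for z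
        using C1_pos_deriv_on_isCont[OF S] pos[OF that] by simp
    qed
    then show ?thesis
      by (simp add: Q(2))
  qed
  ultimately show ?thesis
    using Q QS by blast
qed

lemma C1_pos_deriv_between_on_pos:
  assumes \<phi>1: "ext_class_K_inf \<phi>1" and \<phi>2: "ext_class_K_inf \<phi>2"
    and contr: "\<And>r. 0 < r \<Longrightarrow> \<phi>1 (\<phi>2 r) < r"
  shows "\<exists>\<psi>. (\<forall>r>0. \<phi>2 r < \<psi> r \<and> \<psi> r < inv \<phi>1 r) \<and> C1_pos_deriv_on {0<..} \<psi>"
proof -
  have i: "ext_class_K_inf (\<phi>1 \<circ> \<phi>2)"
    using ext_class_K_inf_comp[OF \<phi>1 \<phi>2] .
  obtain S where S: "C1_pos_deriv_on {0<..} S" "\<And>u. \<exists>x>0. S x = u"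
    and gap: "\<And>t. 0 < t \<Longrightarrow> S (\<phi>1 (\<phi>2 t)) + 1 \<le> S t"
    using contraction_scale[OF i] contr by auto
  obtain Q where Q: "strict_mono Q" "\<And>u. 0 < Q u \<and> S (Q u) = u \<and> isCont Q u"
    and QS: "\<And>x. 0 < x \<Longrightarrow> Q (S x) = x"
    using C1_pos_deriv_on_pos_inverse[OF S] by blast
  define M where "M = \<phi>2 \<circ> Q"
  have "isCont M u" for u
    unfolding M_def using Q(2)[of u] ext_class_K_inf_isCont[OF \<phi>2] by (simp add: continuous_at_compose)
  moreover have "strict_mono M"
    unfolding M_def using ext_class_K_inf_strict_mono[OF \<phi>2] Q(1) by (rule strict_mono_o)
  ultimately obtain F where F: "C1_pos_deriv_on UNIV F" "\<And>u. M u < F u \<and> F u < M (u + 1)"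
    using C1_pos_deriv_between_unit_shift by blast
  have "\<phi>2 r < F (S r) \<and> F (S r) < inv \<phi>1 r" if r: "0 < r" for r
  proof -
    define q where "q = Q (S r + 1)"
    have q: "0 < q" "S q = S r + 1"
      using Q(2) by (simp_all add: q_def)
    have "\<phi>1 (\<phi>2 q) \<le> r"
    proof (rule ccontr)
      assume "\<not> \<phi>1 (\<phi>2 q) \<le> r"
      then have "S r < S (\<phi>1 (\<phi>2 q))"
        using r by (intro C1_pos_deriv_on_less[OF S(1)]) auto
      then show False
        using gap[OF q(1)] q(2) by simp
    qed
    then have "\<phi>2 q \<le> inv \<phi>1 r"
      by (simp add: \<phi>1 ext_class_K_inf_le_inv_iff)
    then show ?thesis
      using F(2)[of "S r"] QS[OF r] by (simp add: M_def q_def)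
  qed
  moreover have "C1_pos_deriv_on {0<..} (F \<circ> S)"
    using C1_pos_deriv_on_comp[OF _ F(1) S(1)] by simp
  ultimately show ?thesis
    by (intro exI[of _ "F \<circ> S"]) auto
qed

lemma squeezed_isCont_zero:
  assumes a: "ext_class_K_inf a" and b: "ext_class_K_inf b" and zero: "\<phi> 0 = 0"
    and between: "\<And>r. r \<noteq> 0 \<Longrightarrow> min (a r) (b r) \<le> \<phi> r \<and> \<phi> r \<le> max (a r) (b r)"
  shows "isCont \<phi> 0"
proof -
  define g where "g r = \<bar>a r\<bar> + \<bar>b r\<bar>" for r
  have "(g \<longlongrightarrow> 0) (at 0)"
    using ext_class_K_inf_isCont[OF a, of 0] ext_class_K_inf_isCont[OF b, of 0]
    unfolding g_def by (intro tendsto_eq_intros) (auto simp: isCont_def a b ext_class_K_inf_zero)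
  moreover have "- g r \<le> \<phi> r \<and> \<phi> r \<le> g r" for r
    using between[of r] zero unfolding g_def by (cases "r = 0") auto
  ultimately have "(\<phi> \<longlongrightarrow> 0) (at 0)"
    using tendsto_sandwich[of "\<lambda>r. - g r" \<phi> "at 0" g 0] tendsto_minus[of g 0] by auto
  then show ?thesis
    by (simp add: isCont_def zero)
qed

lemma squeezed_unbounded:
  assumes a: "ext_class_K_inf a" and b: "ext_class_K_inf b"
    and between: "\<And>r. r \<noteq> 0 \<Longrightarrow> min (a r) (b r) \<le> \<phi> r \<and> \<phi> r \<le> max (a r) (b r)"
  shows "(\<exists>r. M < \<phi> r) \<and> (\<exists>r. \<phi> r < M)"
proof (intro conjI)
  have a_le: "a x \<le> a y" and b_le: "b x \<le> b y" if "x \<le> y" for x y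
    using that a b by (simp_all add: ext_class_K_inf_strict_mono strict_mono_less_eq)
  obtain r1 r2 where r12: "M < a r1" "M < b r2"
    using a b unfolding ext_class_K_inf_def by blast
  define r where "r = max 1 (max r1 r2)"
  have "r1 \<le> r" "r2 \<le> r" "r \<noteq> 0"
    by (auto simp: r_def)
  then have "M < a r" "M < b r"
    using r12 a_le b_le by (blast intro: less_le_trans)+
  then show "\<exists>r. M < \<phi> r"
    using between[OF \<open>r \<noteq> 0\<close>] by (intro exI[of _ r]) (auto simp: min_def split: if_split_asm)
  obtain s1 s2 where s12: "a s1 < M" "b s2 < M"
    using a b unfolding ext_class_K_inf_def by blast
  define s where "s = min (- 1) (min s1 s2)"
  have "s \<le> s1" "s \<le> s2" "s \<noteq> 0"
    by (auto simp: s_def)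
  then have "a s < M" "b s < M"
    using s12 a_le b_le by (blast intro: le_less_trans)+
  then show "\<exists>r. \<phi> r < M"
    using between[OF \<open>s \<noteq> 0\<close>] by (intro exI[of _ s]) (auto simp: max_def split: if_split_asm)
qed

lemma C1_pos_deriv_on_nonzero_strict_mono:
  assumes C1: "C1_pos_deriv_on (UNIV - {0}) \<phi>" and zero: "\<phi> 0 = 0"
    and pos: "\<And>r. 0 < r \<Longrightarrow> 0 < \<phi> r" and neg: "\<And>r. r < 0 \<Longrightarrow> \<phi> r < 0"
  shows "strict_mono \<phi>"
proof (rule strict_monoI)
  fix x y :: real assume "x < y"
  show "\<phi> x < \<phi> y"
  proof (cases "0 < x \<or> y < 0")
    case True
    then show ?thesis
      using \<open>x < y\<close> by (intro C1_pos_deriv_on_less[OF C1]) auto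
  next
    case False
    then have "0 \<le> \<phi> y"
      using pos zero by (cases "y = 0") (auto intro: less_imp_le)
    show ?thesis
    proof (cases "x = 0")
      case True
      then show ?thesis
        using \<open>x < y\<close> pos zero by simp
    next
      case False
      then show ?thesis
        using \<open>\<not> (0 < x \<or> y < 0)\<close> \<open>0 \<le> \<phi> y\<close> neg[of x] by simp
    qed
  qed
qed

lemma ext_class_K_inf_squeezed:
  assumes a: "ext_class_K_inf a" and b: "ext_class_K_inf b" and zero: "\<phi> 0 = 0"
    and between: "\<And>r. r \<noteq> 0 \<Longrightarrow> min (a r) (b r) \<le> \<phi> r \<and> \<phi> r \<le> max (a r) (b r)"
    and C1: "C1_pos_deriv_on (UNIV - {0}) \<phi>"
  shows "ext_class_K_inf \<phi>"
proof -
  have "isCont \<phi> r" for r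
  proof (cases "r = 0")
    case True
    then show ?thesis
      using squeezed_isCont_zero[OF a b zero between] by simp
  next
    case False
    then show ?thesis
      using C1_pos_deriv_on_isCont[OF C1] by simp
  qed
  then have "continuous_on UNIV \<phi>"
    by (simp add: continuous_at_imp_continuous_on)
  moreover have "strict_mono \<phi>"
  proof (rule C1_pos_deriv_on_nonzero_strict_mono[OF C1 zero])
    show "0 < \<phi> r" if "0 < r" for r
      using between[of r] ext_class_K_inf_pos[OF a that] ext_class_K_inf_pos[OF b that] that by auto
    show "\<phi> r < 0" if "r < 0" for r
      using between[of r] ext_class_K_inf_neg[OF a that] ext_class_K_inf_neg[OF b that] that by auto
  qed
  moreover have "(\<exists>r. M < \<phi> r) \<and> (\<exists>r. \<phi> r < M)" for M
    by (rule squeezed_unbounded[OF a b between])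
  ultimately show ?thesis
    unfolding ext_class_K_inf_def using zero by blast
qed

theorem lemma4:
  fixes \<phi>1 \<phi>2 :: "real \<Rightarrow> real"
  assumes "ext_class_K_inf \<phi>1" and "ext_class_K_inf \<phi>2"
    and "\<forall>r<0. (\<phi>1 \<circ> \<phi>2) r > r"
    and "\<forall>r>0. (\<phi>1 \<circ> \<phi>2) r < r"
  shows "\<exists>\<phi>. ext_class_K_inf \<phi>
    \<and> (\<forall>r<0. inv \<phi>1 r < \<phi> r \<and> \<phi> r < \<phi>2 r)
    \<and> (\<forall>r>0. \<phi>2 r < \<phi> r \<and> \<phi> r < inv \<phi>1 r)
    \<and> (\<forall>r. r \<noteq> 0 \<longrightarrow> \<phi> differentiable (at r))
    \<and> continuous_on (UNIV - {0}) (deriv \<phi>)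
    \<and> (\<forall>r. r \<noteq> 0 \<longrightarrow> deriv \<phi> r > 0)"
proof -
  obtain \<psi>p where \<psi>p: "\<And>r. 0 < r \<Longrightarrow> \<phi>2 r < \<psi>p r \<and> \<psi>p r < inv \<phi>1 r" "C1_pos_deriv_on {0<..} \<psi>p"
    using C1_pos_deriv_between_on_pos[OF assms(1,2)] assms(4) by auto
  have "- \<phi>1 (- (- \<phi>2 (- r))) < r" if "0 < r" for r
    using assms(3)[rule_format, of "- r"] that by simp
  then obtain \<psi>n where \<psi>n: "\<And>r. 0 < r \<Longrightarrow> - \<phi>2 (- r) < \<psi>n r \<and> \<psi>n r < - inv \<phi>1 (- r)"
      "C1_pos_deriv_on {0<..} \<psi>n"
    using C1_pos_deriv_between_on_pos[OF ext_class_K_inf_reflect[OF assms(1)] ext_class_K_inf_reflect[OF assms(2)]]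
    by (auto simp: inv_reflect ext_class_K_inf_bij assms(1))
  define \<phi> where "\<phi> r = (if 0 < r then \<psi>p r else if r < 0 then - \<psi>n (- r) else 0)" for r
  have between_pos: "\<phi>2 r < \<phi> r \<and> \<phi> r < inv \<phi>1 r" if "0 < r" for r
    using \<psi>p(1)[OF that] that by (simp add: \<phi>_def)
  have between_neg: "inv \<phi>1 r < \<phi> r \<and> \<phi> r < \<phi>2 r" if "r < 0" for r
    using \<psi>n(1)[of "- r"] that by (auto simp: \<phi>_def)
  have C1: "C1_pos_deriv_on (UNIV - {0}) \<phi>"
    unfolding \<phi>_def by (rule C1_pos_deriv_on_glue[OF \<psi>p(2) \<psi>n(2)])
  have "min (\<phi>2 r) (inv \<phi>1 r) \<le> \<phi> r \<and> \<phi> r \<le> max (\<phi>2 r) (inv \<phi>1 r)" if "r \<noteq> 0" for r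
    using between_pos[of r] between_neg[of r] that by (cases "0 < r") auto
  then have "ext_class_K_inf \<phi>"
    using ext_class_K_inf_squeezed[OF assms(2) ext_class_K_inf_inv[OF assms(1)] _ _ C1]
    by (simp add: \<phi>_def)
  moreover have "continuous_on (UNIV - {0}) (deriv \<phi>)"
    using C1 by (rule C1_pos_deriv_on_continuous_on_deriv)
  ultimately show ?thesis
    using between_pos between_neg C1 unfolding C1_pos_deriv_on_def by blast
qed

end
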